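(* Let $X$ be a random variable geometrically distributed with parameter $f \in (0,1]$, i.e. $\Pr[X = k] = (1-f)^{k-1} f$ for $k \in \{1,2,\dots\}$. Then with $d_1 = 4/\pi$, $$\sqrt{\mathbb{E}[X]} \le \mathbb{E}\left[\sqrt{d_1 X}\right]$$ for all $f \in (0,1]$. *)

theory Defs
  imports "HOL-Probability.Probability"
begin

end

theory Submission
  imports Defs
begin

text \<open>
  For the geometric distribution \<open>\<bbbE>[g X] = f * (\<Sum>n. g (n + 1) * (1 - f)^n)\<close>.
  Hence \<open>\<bbbE>[X] = 1/f\<close>, while by the binomial series
  \<open>sqrt (1/f) = f * f powr (-3/2) = f * (\<Sum>n. (3/2)\<^sub>n / n! * (1 - f)^n)\<close>.
  So it suffices to compare coefficients:
  \<open>(3/2)\<^sub>n / n! = \<Gamma>(n + 3/2) / (\<Gamma>(3/2) * \<Gamma>(n + 1))\<close>, and log-convexity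
  of \<open>\<Gamma>\<close> on \<open>[n + 1, n + 2]\<close> gives \<open>\<Gamma>(n + 3/2) \<le> sqrt (n + 1) * \<Gamma>(n + 1)\<close>,
  while \<open>1 / \<Gamma>(3/2) = 2 / sqrt \<pi> = sqrt d\<^sub>1\<close>.
\<close>

lemma Gamma_plus_half_le:
  fixes x :: real
  assumes x: "0 < x"
  shows "Gamma (x + 1/2) \<le> sqrt x * Gamma x"
proof -
  have Gamma_pos: "0 < Gamma x" "0 < Gamma (x + 1/2)"
    using x by simp_all
  have "x + 1/2 = (1 - 1/2) *\<^sub>R x + (1/2) *\<^sub>R (x + 1)"
    by (simp add: field_simps)
  then have "ln (Gamma (x + 1/2)) \<le> ln (Gamma x) / 2 + ln (Gamma (x + 1)) / 2"
    using convex_onD[OF log_convex_Gamma_real, of "1/2" x "x + 1"] x by simp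
  moreover have "x \<notin> \<int>\<^sub>\<le>\<^sub>0"
    using x by auto
  then have "ln (Gamma (x + 1)) = ln x + ln (Gamma x)"
    using x Gamma_pos by (simp add: Gamma_plus1 ln_mult_pos)
  moreover have "ln (sqrt x * Gamma x) = ln x / 2 + ln (Gamma x)"
    using x Gamma_pos by (simp add: ln_mult_pos ln_sqrt)
  ultimately have "ln (Gamma (x + 1/2)) \<le> ln (sqrt x * Gamma x)"
    by linarith
  then show ?thesis
    using x Gamma_pos by simp
qed

lemma Gamma_three_halves_real: "Gamma (3/2 :: real) = sqrt pi / 2"
proof -
  have "(1/2 :: real) \<notin> \<int>\<^sub>\<le>\<^sub>0"
    by auto
  then show ?thesis
    using Gamma_plus1[of "1/2 :: real"] by (simp add: Gamma_one_half_real)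
qed

lemma pochhammer_three_halves_le:
  "pochhammer (3/2 :: real) n / fact n \<le> sqrt (4 / pi * real (Suc n))"
proof -
  have "(3/2 :: real) \<notin> \<int>\<^sub>\<le>\<^sub>0"
    by auto
  then have "pochhammer (3/2) n / fact n
      = 2 / sqrt pi * (Gamma ((real n + 1) + 1/2) / Gamma (real n + 1))"
    by (simp add: pochhammer_Gamma Gamma_three_halves_real add_ac flip: Gamma_fact)
  also have "\<dots> \<le> 2 / sqrt pi * sqrt (real n + 1)"
    using Gamma_plus_half_le[of "real n + 1"] by (intro mult_left_mono) (simp_all add: divide_le_eq)
  also have "\<dots> = sqrt (4 / pi * real (Suc n))"
    unfolding real_sqrt_mult real_sqrt_divide by (simp add: add.commute)
  finally show ?thesis .
qed

lemma pochhammer_power_series_sums: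
  fixes a q :: real
  assumes "\<bar>q\<bar> < 1"
  shows "(\<lambda>n. pochhammer a n / fact n * q ^ n) sums (1 - q) powr (- a)"
proof -
  have "(\<lambda>n. ((- a) gchoose n) * (- q) ^ n) sums (1 + - q) powr (- a)"
    using assms by (intro gen_binomial_real) simp
  moreover have "((- a) gchoose n) * (- q) ^ n = pochhammer a n / fact n * q ^ n" for n
  proof -
    have gchoose_eq: "(- a) gchoose n = (- 1) ^ n * (pochhammer a n / fact n)"
      unfolding gbinomial_pochhammer by simp
    have sign: "(- 1 :: real) ^ n * (- 1) ^ n = 1"
      by (simp flip: power_mult_distrib)
    have "((- a) gchoose n) * (- q) ^ n = ((- 1) ^ n * (- 1) ^ n) * (pochhammer a n / fact n * q ^ n)"
      unfolding gchoose_eq power_minus[of q] by (simp only: mult_ac)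
    then show ?thesis
      unfolding sign by simp
  qed
  ultimately show ?thesis
    by simp
qed

lemma summable_sqrt_mult_Suc_power:
  fixes c q :: real
  assumes "0 \<le> c" and "\<bar>q\<bar> < 1"
  shows "summable (\<lambda>n. sqrt (c * real (Suc n)) * q ^ n)"
proof (rule summable_comparison_test')
  show "summable (\<lambda>n. sqrt c * (real (Suc n) * \<bar>q\<bar> ^ n))"
    using geometric_deriv_sums[of "\<bar>q\<bar>"] assms(2) by (intro summable_mult sums_summable) simp
  show "norm (sqrt (c * real (Suc n)) * q ^ n) \<le> sqrt c * (real (Suc n) * \<bar>q\<bar> ^ n)" for n
  proof -
    have "sqrt (real (Suc n)) \<le> real (Suc n)"
      by (intro real_le_lsqrt) (auto simp: power2_eq_square)
    then show ?thesis
      using assms(1)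
      by (simp add: abs_mult power_abs real_sqrt_mult mult_left_mono mult_right_mono flip: mult.assoc)
  qed
qed

lemma one_minus_powr_three_halves_le:
  fixes q :: real
  assumes "0 \<le> q" and "q < 1"
  shows "(1 - q) powr (- 3/2) \<le> (\<Sum>n. sqrt (4 / pi * real (Suc n)) * q ^ n)"
proof (rule sums_le)
  show "(\<lambda>n. pochhammer (3/2) n / fact n * q ^ n) sums (1 - q) powr (- 3/2)"
    using pochhammer_power_series_sums[of q "3/2"] assms by simp
  show "(\<lambda>n. sqrt (4 / pi * real (Suc n)) * q ^ n) sums (\<Sum>n. sqrt (4 / pi * real (Suc n)) * q ^ n)"
    using summable_sqrt_mult_Suc_power[of "4 / pi" q] assms by (intro summable_sums) simp
  show "pochhammer (3/2) n / fact n * q ^ n \<le> sqrt (4 / pi * real (Suc n)) * q ^ n" for n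
    using pochhammer_three_halves_le[of n] assms(1) by (intro mult_right_mono) simp_all
qed

lemma expectation_nat_sums:
  fixes M :: "'a measure" and X :: "'a \<Rightarrow> nat" and g :: "nat \<Rightarrow> real"
  assumes "prob_space M"
    and X: "X \<in> measurable M (count_space UNIV)"
    and g: "\<And>k. 0 \<le> g k"
    and s: "(\<lambda>k. g k * measure M {\<omega> \<in> space M. X \<omega> = k}) sums s"
  shows "prob_space.expectation M (\<lambda>\<omega>. g (X \<omega>)) = s"
proof -
  interpret prob_space M by fact
  let ?A = "\<lambda>k. {\<omega> \<in> space M. X \<omega> = k}"
  have A: "?A k \<in> sets M" for k
    using X by (simp add: measurable_count_space_eq2)
  have "(\<integral>\<^sup>+ \<omega>. ennreal (g (X \<omega>)) \<partial>M)
      = (\<integral>\<^sup>+ \<omega>. (\<Sum>k. ennreal (g k) * indicator (?A k) \<omega>) \<partial>M)"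
  proof (rule nn_integral_cong)
    fix \<omega> assume "\<omega> \<in> space M"
    then have "\<omega> \<in> ?A (X \<omega>)" by simp
    moreover have "disjoint_family ?A" by (auto simp: disjoint_family_on_def)
    ultimately show "ennreal (g (X \<omega>)) = (\<Sum>k. ennreal (g k) * indicator (?A k) \<omega>)"
      by (simp add: suminf_cmult_indicator)
  qed
  also have "\<dots> = (\<Sum>k. \<integral>\<^sup>+ \<omega>. ennreal (g k) * indicator (?A k) \<omega> \<partial>M)"
    using A by (intro nn_integral_suminf) auto
  also have "\<dots> = (\<Sum>k. ennreal (g k * measure M (?A k)))"
    using A g by (simp add: nn_integral_cmult_indicator emeasure_eq_measure ennreal_mult'')
  also have "\<dots> = ennreal s"
    using g s by (intro suminf_ennreal_eq) auto
  finally have "(\<integral>\<^sup>+ \<omega>. ennreal (g (X \<omega>)) \<partial>M) = ennreal s" .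
  moreover have "0 \<le> s"
    using g by (intro sums_le[OF _ sums_zero s]) auto
  moreover have "(\<lambda>\<omega>. g (X \<omega>)) \<in> borel_measurable M"
    using X by (intro measurable_compose[OF X]) auto
  ultimately show ?thesis
    using g by (simp add: integral_eq_nn_integral)
qed

lemma expectation_geometric:
  fixes M :: "'a measure" and X :: "'a \<Rightarrow> nat" and f :: real and g :: "nat \<Rightarrow> real"
  assumes "prob_space M"
    and "X \<in> measurable M (count_space UNIV)"
    and geometric: "\<And>k. k \<ge> 1 \<Longrightarrow>
           measure M {\<omega> \<in> space M. X \<omega> = k} = (1 - f) ^ (k - 1) * f"
    and "g 0 = 0" and "\<And>k. 0 \<le> g k"
    and summable: "summable (\<lambda>n. g (Suc n) * (1 - f) ^ n)"
  shows "prob_space.expectation M (\<lambda>\<omega>. g (X \<omega>)) = f * (\<Sum>n. g (Suc n) * (1 - f) ^ n)"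
proof (rule expectation_nat_sums)
  \<comment> \<open>The hypotheses say nothing about the event \<open>X = 0\<close>, whence \<open>g 0 = 0\<close>.\<close>
  have "(\<lambda>n. f * (g (Suc n) * (1 - f) ^ n)) sums (f * (\<Sum>n. g (Suc n) * (1 - f) ^ n))"
    using summable by (intro sums_mult summable_sums)
  then have "(\<lambda>n. g (Suc n) * measure M {\<omega> \<in> space M. X \<omega> = Suc n})
      sums (f * (\<Sum>n. g (Suc n) * (1 - f) ^ n))"
    using geometric by (simp add: mult_ac)
  from sums_Suc_iff[THEN iffD1, OF this]
  show "(\<lambda>k. g k * measure M {\<omega> \<in> space M. X \<omega> = k})
      sums (f * (\<Sum>n. g (Suc n) * (1 - f) ^ n))"
    using \<open>g 0 = 0\<close> by simp
qed (use assms in auto)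

theorem lemma7:
  fixes M :: "'a measure" and X :: "'a \<Rightarrow> nat" and f :: real
  assumes "prob_space M"
    and "X \<in> measurable M (count_space UNIV)"
    and "0 < f" and "f \<le> 1"
    and "\<And>k. k \<ge> 1 \<Longrightarrow>
           measure M {\<omega> \<in> space M. X \<omega> = k} = (1 - f) ^ (k - 1) * f"
  shows "sqrt (prob_space.expectation M (\<lambda>\<omega>. real (X \<omega>)))
           \<le> prob_space.expectation M (\<lambda>\<omega>. sqrt ((4 / pi) * real (X \<omega>)))"
proof -
  have "(\<lambda>n. real (Suc n) * (1 - f) ^ n) sums (1 / f\<^sup>2)"
    using geometric_deriv_sums[of "1 - f"] assms(3,4) by simp
  then have "prob_space.expectation M (\<lambda>\<omega>. real (X \<omega>)) = 1 / f"
    using expectation_geometric[OF assms(1,2,5), of real] assms(3)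
    by (simp add: sums_iff power2_eq_square)
  then have "sqrt (prob_space.expectation M (\<lambda>\<omega>. real (X \<omega>))) = f * f powr (- 3/2)"
    using assms(3) powr_mult_base[of f "- 3/2"]
    by (simp add: powr_minus_divide powr_half_sqrt real_sqrt_divide)
  also have "\<dots> \<le> f * (\<Sum>n. sqrt (4 / pi * real (Suc n)) * (1 - f) ^ n)"
    using one_minus_powr_three_halves_le[of "1 - f"] assms(3,4) by (intro mult_left_mono) simp_all
  also have "\<dots> = prob_space.expectation M (\<lambda>\<omega>. sqrt ((4 / pi) * real (X \<omega>)))"
    using summable_sqrt_mult_Suc_power[of "4 / pi" "1 - f"] assms(3,4)
    by (intro expectation_geometric[OF assms(1,2,5), symmetric]) simp_all
  finally show ?thesis .
qed

end
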